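(* Let $\mathcal{H}$ be an infinite, continuous index set of estimation tasks (with continuous estimates and errors), let $S_{\text{def}}$ be a random defining dataset with realization $s$, and for each $h\in\mathcal{H}$ let $\theta_h$ be an unknown target estimand, $\hat\theta_h=\hat\theta_h(s)$ an estimate computed from $S_{\text{def}}$, and $e_h=e_h(s)\in\mathbb{R}$ an error. Let $\mathcal{E}(s):=\{(h,\hat\theta_h(s),\theta_h,e_h(s)):h\in\mathcal{H}\}$, and given $S_{\text{def}}=s$ let $S_{\text{err}}$ be drawn from a distribution $\mathcal{D}$ (possibly depending on $s$). Suppose there are functions $\hat u(S_{\text{err}},h,\lambda)\in\mathbb{R}$ with $\Pr_{S_{\text{err}}\sim\mathcal{D}}(\hat u(S_{\text{err}},h,\lambda)\ge e_h\mid\mathcal{E}(s))\ge 1-\lambda$ for all $h\in\mathcal{H}$, $\lambda\in(0,1)$. Let $\hat\xi(S_{\text{err}},\delta):=\sup_{h\in\mathcal{H}}\hat u(S_{\text{err}},h,\delta)$. Then for any $\delta\in(0,1)$, $$\Pr_{S_{\text{err}}\sim\mathcal{D}}\Big(\hat\xi(S_{\text{err}},\delta)\ge\sup_{h\in\mathcal{H}}e_h\,\Big|\,\mathcal{E}(s)\Big)\ge 1-\delta\quad\text{and}\quad \Pr_{(S_{\text{def}},S_{\text{err}})}\Big(\hat\xi(S_{\text{err}},\delta)\ge\sup_{h\in\mathcal{H}}e_h\Big)\ge 1-\delta .$$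
   Context: Conditioning on $\mathcal{E}(s)$ means conditioning on $S_{\text{def}}=s$, so estimates and errors are fixed with respect to the randomness of $S_{\text{err}}$; $S_{\text{err}}$ is not used to construct the estimates. *)

theory Defs
  imports "HOL-Probability.Probability"
begin

text \<open>The simultaneous upper bound: the supremum over all tasks of the
pointwise bounds (taken in the extended reals, so that an unbounded family
has supremum infinity).\<close>
definition xi_hat :: "'h set \<Rightarrow> ('w \<Rightarrow> 'h \<Rightarrow> real \<Rightarrow> real) \<Rightarrow> 'w \<Rightarrow> real \<Rightarrow> ereal" where
  "xi_hat H u w \<delta> = (SUP h\<in>H. ereal (u w h \<delta>))"

definition sup_err :: "'h set \<Rightarrow> ('s \<Rightarrow> 'h \<Rightarrow> real) \<Rightarrow> 's \<Rightarrow> ereal" where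
  "sup_err H e s = (SUP h\<in>H. ereal (e s h))"

definition joint_law :: "'s measure \<Rightarrow> 'w measure \<Rightarrow> ('s \<Rightarrow> 'w measure) \<Rightarrow> ('s \<times> 'w) measure" where
  "joint_law P W D = P \<bind> (\<lambda>s. distr (D s) (P \<Otimes>\<^sub>M W) (\<lambda>w. (s, w)))"

end

theory Submission
  imports Defs
begin

text \<open>No union bound over the tasks is needed. Choose tasks \<open>h\<^sub>n\<close> whose errors increase to
  \<open>sup\<^sub>h e\<^sub>h\<close>. Every \<open>w\<close> lying in infinitely many of the events \<open>u(w, h\<^sub>n) \<ge> e(h\<^sub>n)\<close> satisfies
  \<open>sup\<^sub>h u(w, h) \<ge> sup\<^sub>h e\<^sub>h\<close>, and the limsup of events of probability at least \<open>1 - \<delta>\<close> has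
  probability at least \<open>1 - \<delta>\<close>. Integrating this conditional bound against the law of the
  defining dataset gives the unconditional one.\<close>

lemma (in finite_measure) measure_limsup_ge:
  assumes A: "range A \<subseteq> sets M" and c: "\<And>n. c \<le> measure M (A n)"
  shows "c \<le> measure M (limsup A)"
proof -
  define C where "C n = (\<Union>m\<in>{n..}. A m)" for n
  have C_sets: "range C \<subseteq> sets M"
    using A by (auto simp: C_def)
  have "(\<lambda>n. measure M (C n)) \<longlonglongrightarrow> measure M (\<Inter>n. C n)"
    using C_sets by (intro finite_Lim_measure_decseq) (fastforce simp: C_def decseq_def intro: order_trans)+
  moreover have "c \<le> measure M (C n)" for n
    using c[of n] finite_measure_mono[of "A n" "C n"] C_sets by (force simp: C_def)
  ultimately have "c \<le> measure M (\<Inter>n. C n)"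
    by (intro LIMSEQ_le_const) auto
  then show ?thesis
    by (simp add: limsup_INF_SUP C_def)
qed

lemma (in finite_measure) measure_SUP_le_SUP_ge:
  fixes e :: "'h \<Rightarrow> real" and u :: "'a \<Rightarrow> 'h \<Rightarrow> real"
  assumes H: "H \<noteq> {}"
    and sets_bound: "\<And>h. h \<in> H \<Longrightarrow> {x \<in> space M. e h \<le> u x h} \<in> sets M"
    and measure_bound: "\<And>h. h \<in> H \<Longrightarrow> c \<le> measure M {x \<in> space M. e h \<le> u x h}"
    and sets_SUP: "{x \<in> space M. (SUP h\<in>H. ereal (e h)) \<le> (SUP h\<in>H. ereal (u x h))} \<in> sets M"
  shows "c \<le> measure M {x \<in> space M. (SUP h\<in>H. ereal (e h)) \<le> (SUP h\<in>H. ereal (u x h))}"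
    (is "_ \<le> measure M ?S")
proof -
  obtain f :: "nat \<Rightarrow> ereal" where f_inc: "incseq f"
    and f_range: "range f \<subseteq> (\<lambda>h. ereal (e h)) ` H" and f_SUP: "(SUP h\<in>H. ereal (e h)) = (SUP n. f n)"
    using Sup_countable_SUP[of "(\<lambda>h. ereal (e h)) ` H"] H by auto
  have "\<forall>n. \<exists>h\<in>H. f n = ereal (e h)"
    using f_range by auto
  then obtain t where t: "\<And>n. t n \<in> H" "\<And>n. f n = ereal (e (t n))"
    by metis
  define B where "B n = {x \<in> space M. e (t n) \<le> u x (t n)}" for n
  have "c \<le> measure M (limsup B)"
    using t(1) sets_bound measure_bound by (intro measure_limsup_ge) (auto simp: B_def)
  also have "\<dots> \<le> measure M ?S"
  proof (rule finite_measure_mono[OF _ sets_SUP], rule subsetI)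
    fix x assume x: "x \<in> limsup B"
    have "f n \<le> (SUP h\<in>H. ereal (u x h))" for n
    proof -
      obtain m where "n \<le> m" "x \<in> B m"
        using x by (auto simp: limsup_INF_SUP)
      have "f n \<le> f m"
        using f_inc \<open>n \<le> m\<close> by (simp add: incseq_def)
      also have "\<dots> = ereal (e (t m))"
        by (rule t(2))
      also have "\<dots> \<le> ereal (u x (t m))"
        using \<open>x \<in> B m\<close> by (simp add: B_def)
      also have "\<dots> \<le> (SUP h\<in>H. ereal (u x h))"
        using t(1) by (rule SUP_upper)
      finally show ?thesis .
    qed
    moreover have "x \<in> space M"
      using x by (auto simp: limsup_INF_SUP B_def)
    ultimately show "x \<in> ?S"
      by (simp add: f_SUP SUP_least)
  qed
  finally show ?thesis .
qed

lemma measurable_Pair_kernel: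
  assumes "D \<in> measurable P (subprob_algebra W)" and "s \<in> space P"
  shows "Pair s \<in> measurable (D s) (P \<Otimes>\<^sub>M W)"
  using assms(2) by (simp add: measurable_cong_sets[OF sets_kernel[OF assms] refl])

lemma measurable_joint_law_kernel:
  assumes "D \<in> measurable P (subprob_algebra W)"
  shows "(\<lambda>s. distr (D s) (P \<Otimes>\<^sub>M W) (Pair s)) \<in> measurable P (subprob_algebra (P \<Otimes>\<^sub>M W))"
  by (rule measurable_distr2[where f=Pair and M=W]) (simp_all add: assms)

lemma prob_space_joint_law:
  assumes "prob_space P" and "\<And>s. s \<in> space P \<Longrightarrow> prob_space (D s)"
    and D: "D \<in> measurable P (subprob_algebra W)"
  shows "prob_space (joint_law P W D)"
  unfolding joint_law_def
proof (rule prob_space.prob_space_bind[OF assms(1) _ measurable_joint_law_kernel[OF D]])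
  show "AE s in P. prob_space (distr (D s) (P \<Otimes>\<^sub>M W) (Pair s))"
    using assms(2) measurable_Pair_kernel[OF D]
    by (intro AE_I2) (rule prob_space.prob_space_distr)
qed

lemma emeasure_joint_law:
  assumes "space P \<noteq> {}" and D: "D \<in> measurable P (subprob_algebra W)"
    and E: "E \<in> sets (P \<Otimes>\<^sub>M W)"
  shows "emeasure (joint_law P W D) E = (\<integral>\<^sup>+s. emeasure (D s) (Pair s -` E) \<partial>P)"
proof -
  have "emeasure (joint_law P W D) E = (\<integral>\<^sup>+s. emeasure (distr (D s) (P \<Otimes>\<^sub>M W) (Pair s)) E \<partial>P)"
    unfolding joint_law_def by (rule emeasure_bind[OF assms(1) measurable_joint_law_kernel[OF D] E])
  also have "\<dots> = (\<integral>\<^sup>+s. emeasure (D s) (Pair s -` E) \<partial>P)"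
  proof (rule nn_integral_cong)
    fix s assume s: "s \<in> space P"
    have "space (D s) = space W"
      by (rule sets_eq_imp_space_eq[OF sets_kernel[OF D s]])
    then have "Pair s -` E \<inter> space (D s) = Pair s -` E"
      using sets.sets_into_space[OF E] by (auto simp: space_pair_measure)
    then show "emeasure (distr (D s) (P \<Otimes>\<^sub>M W) (Pair s)) E = emeasure (D s) (Pair s -` E)"
      by (simp add: emeasure_distr[OF measurable_Pair_kernel[OF D s] E])
  qed
  finally show ?thesis .
qed

lemma measure_joint_law_ge:
  assumes P: "prob_space P" and D_prob: "\<And>s. s \<in> space P \<Longrightarrow> prob_space (D s)"
    and D: "D \<in> measurable P (subprob_algebra W)" and E: "E \<in> sets (P \<Otimes>\<^sub>M W)"
    and c: "\<And>s. s \<in> space P \<Longrightarrow> c \<le> measure (D s) (Pair s -` E)"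
  shows "c \<le> measure (joint_law P W D) E"
proof -
  interpret P: prob_space P by (rule P)
  interpret J: prob_space "joint_law P W D" by (rule prob_space_joint_law[OF P D_prob D])
  have "ennreal c = (\<integral>\<^sup>+s. ennreal c \<partial>P)"
    by (simp add: P.emeasure_space_1)
  also have "\<dots> \<le> (\<integral>\<^sup>+s. emeasure (D s) (Pair s -` E) \<partial>P)"
    using c D_prob by (intro nn_integral_mono) (simp add: finite_measure.emeasure_eq_measure[OF prob_space.finite_measure])
  also have "\<dots> = emeasure (joint_law P W D) E"
    by (rule emeasure_joint_law[OF P.not_empty D E, symmetric])
  also have "\<dots> = ennreal (measure (joint_law P W D) E)"
    by (rule J.emeasure_eq_measure)
  finally show ?thesis
    by simp
qed

theorem theoremD1:
  fixes P :: "'s measure" and W :: "'w measure" and D :: "'s \<Rightarrow> 'w measure"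
    and H :: "'h set" and e :: "'s \<Rightarrow> 'h \<Rightarrow> real"
    and u :: "'w \<Rightarrow> 'h \<Rightarrow> real \<Rightarrow> real" and \<delta> :: real
  assumes P_prob: "prob_space P"
    and D_prob: "\<And>s. s \<in> space P \<Longrightarrow> prob_space (D s)"
    and D_sets: "\<And>s. s \<in> space P \<Longrightarrow> sets (D s) = sets W"
    and D_meas: "D \<in> measurable P (subprob_algebra W)"
    and H_inf: "infinite H"
    and u_meas: "\<And>s h lam. s \<in> space P \<Longrightarrow> h \<in> H \<Longrightarrow> lam \<in> {0<..<1} \<Longrightarrow>
        {w \<in> space W. u w h lam \<ge> e s h} \<in> sets W"
    and u_bound: "\<And>s h lam. s \<in> space P \<Longrightarrow> h \<in> H \<Longrightarrow> lam \<in> {0<..<1} \<Longrightarrow>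
        measure (D s) {w \<in> space W. u w h lam \<ge> e s h} \<ge> 1 - lam"
    and ev_meas: "\<And>s. s \<in> space P \<Longrightarrow>
        {w \<in> space W. xi_hat H u w \<delta> \<ge> sup_err H e s} \<in> sets W"
    and ev_joint_meas: "{(s, w) \<in> space (P \<Otimes>\<^sub>M W). xi_hat H u w \<delta> \<ge> sup_err H e s}
        \<in> sets (P \<Otimes>\<^sub>M W)"
    and \<delta>: "\<delta> \<in> {0<..<1}"
  shows "(\<forall>s \<in> space P. measure (D s) {w \<in> space W. xi_hat H u w \<delta> \<ge> sup_err H e s} \<ge> 1 - \<delta>)
    \<and> measure (joint_law P W D)
        {(s, w) \<in> space (P \<Otimes>\<^sub>M W). xi_hat H u w \<delta> \<ge> sup_err H e s} \<ge> 1 - \<delta>"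
proof -
  have H: "H \<noteq> {}"
    using H_inf by auto
  have conditional: "1 - \<delta> \<le> measure (D s) {w \<in> space W. xi_hat H u w \<delta> \<ge> sup_err H e s}"
    if s: "s \<in> space P" for s
  proof -
    interpret prob_space "D s" by (rule D_prob[OF s])
    have "space (D s) = space W"
      by (rule sets_eq_imp_space_eq[OF D_sets[OF s]])
    then show ?thesis
      using measure_SUP_le_SUP_ge[of H "e s" "\<lambda>w h. u w h \<delta>" "1 - \<delta>"]
        H u_meas[OF s _ \<delta>] u_bound[OF s _ \<delta>] ev_meas[OF s] D_sets[OF s]
      by (simp add: xi_hat_def sup_err_def)
  qed
  moreover have "1 - \<delta> \<le> measure (joint_law P W D)
      {(s, w) \<in> space (P \<Otimes>\<^sub>M W). xi_hat H u w \<delta> \<ge> sup_err H e s}"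
    using conditional
    by (intro measure_joint_law_ge[OF P_prob D_prob D_meas ev_joint_meas])
      (simp_all add: space_pair_measure vimage_def)
  ultimately show ?thesis
    by blast
qed

end
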